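(* Let $\eta_1,\eta_3\in[0,1]$ and $\eta_2\ge0$, and define $z^m:=\min\{\eta_2,1\}$ and $z^b:=\min\{\eta_1+\eta_2+\eta_3,1\}-z^m$. Then $$(\eta_1+\eta_3-\eta_1\eta_3)\,e^{-z^m}+1-e^{-z^m}\ \ge\ \frac{2}{e}\,z^b+\frac{3}{2e}\,z^m.$$ *)

theory Defs
  imports Complex_Main
begin

end

theory Submission
  imports Defs
begin

text \<open>
  Since \<open>1 - \<eta>1 - \<eta>3 + \<eta>1\<eta>3 = (1 - \<eta>1)(1 - \<eta>3) \<le> (1 - (\<eta>1 + \<eta>3)/2)\<^sup>2\<close> and
  \<open>z\<^sup>b \<le> \<eta>1 + \<eta>3\<close>, the left-hand side is at least \<open>1 - exp (-m) (1 - t/2)\<^sup>2\<close> with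
  \<open>m = z\<^sup>m\<close>, \<open>t = z\<^sup>b \<in> [0, 1 - m]\<close>. This is concave in \<open>t\<close> while the right-hand side is
  linear in \<open>t\<close>, so it suffices to check the endpoints \<open>t = 0\<close> and \<open>t = 1 - m\<close>.
  Both reduce to polynomial inequalities in \<open>m \<in> [0,1]\<close> via the cubic Taylor bound
  \<open>exp m \<ge> 1 + m + m\<^sup>2/2 + m\<^sup>3/6\<close> and \<open>1/e \<le> 0.3679\<close>.
\<close>

lemma exp_ge_Taylor_sum:
  fixes x :: real
  assumes "0 \<le> x"
  shows "(\<Sum>k<n. x ^ k / fact k) \<le> exp x"
proof -
  have s: "(\<lambda>k. x ^ k /\<^sub>R fact k) sums exp x" by (rule exp_converges)
  have "(\<Sum>k<n. x ^ k /\<^sub>R fact k) \<le> (\<Sum>k. x ^ k /\<^sub>R fact k)"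
    using s assms by (intro sum_le_suminf) (auto simp: sums_summable)
  then show ?thesis
    using s by (simp add: sums_unique[symmetric] divide_inverse mult.commute)
qed

lemma inverse_exp_one_le: "1 / exp 1 \<le> (3679 / 10000 :: real)"
proof -
  have "(\<Sum>k<8. (1::real) ^ k / fact k) \<le> exp 1"
    by (rule exp_ge_Taylor_sum) simp
  moreover have "(27182 / 10000 :: real) \<le> (\<Sum>k<8. 1 ^ k / fact k)"
    by (simp add: numeral_eq_Suc fact_numeral lessThan_Suc)
  ultimately have "27182 / 10000 \<le> exp (1::real)" by linarith
  then have "1 / exp 1 \<le> 1 / (27182 / 10000 :: real)"
    by (intro divide_left_mono) auto
  then show ?thesis by simp
qed

lemma exp_neg_le_inverse_Taylor_cubic:
  fixes m :: real
  assumes "0 \<le> m"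
  shows "exp (- m) \<le> 1 / (1 + m + m\<^sup>2 / 2 + m ^ 3 / 6)"
proof -
  have "(\<Sum>k<4. m ^ k / fact k) \<le> exp m"
    by (rule exp_ge_Taylor_sum) fact
  then have "1 + m + m\<^sup>2 / 2 + m ^ 3 / 6 \<le> exp m"
    by (simp add: numeral_eq_Suc lessThan_Suc fact_numeral power2_eq_square power3_eq_cube)
  moreover have "0 < 1 + m + m\<^sup>2 / 2 + m ^ 3 / 6"
    using assms by (simp add: add_pos_nonneg)
  ultimately have "1 / exp m \<le> 1 / (1 + m + m\<^sup>2 / 2 + m ^ 3 / 6)"
    by (intro divide_left_mono) auto
  then show ?thesis by (simp add: exp_minus inverse_eq_divide)
qed

lemma one_minus_exp_neg_ge:
  fixes m :: real
  assumes "0 \<le> m" "m \<le> 1"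
  shows "3 * m / 2 * (1 / exp 1) \<le> 1 - exp (- m)"
proof -
  define c :: real where "c = 1 / exp 1"
  define P where "P = 1 + m + m\<^sup>2 / 2 + m ^ 3 / 6"
  have P: "1 \<le> P" using assms unfolding P_def by simp
  define Q where "Q = m * P"
  have Q: "Q = m + m\<^sup>2 + m ^ 3 / 2 + m ^ 4 / 6"
    unfolding Q_def P_def by (simp add: algebra_simps power2_eq_square power3_eq_cube power4_eq_xxxx)
  have "Q * c \<le> Q * (3679 / 10000)"
    using assms P inverse_exp_one_le unfolding Q_def c_def by (intro mult_left_mono) auto
  moreover have "m\<^sup>2 \<le> m" "m ^ 3 \<le> m" "m ^ 4 \<le> m"
    using power_decreasing[of 1 _ m] assms by auto
  ultimately have "3 / 2 * (Q * c) \<le> P - 1"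
    using Q assms unfolding P_def by linarith
  then have "3 * m / 2 * c * P \<le> P - 1"
    unfolding Q_def by (simp add: algebra_simps)
  then have "3 * m / 2 * c \<le> (P - 1) / P"
    using P by (simp add: pos_le_divide_eq)
  also have "\<dots> = 1 - 1 / P"
    using P by (simp add: diff_divide_distrib)
  finally show ?thesis
    using exp_neg_le_inverse_Taylor_cubic[OF assms(1)] unfolding c_def P_def by linarith
qed

lemma one_minus_exp_neg_mult_ge:
  fixes m :: real
  assumes "0 \<le> m" "m \<le> 1"
  shows "(2 - m / 2) * (1 / exp 1) \<le> 1 - exp (- m) * ((1 + m) / 2)\<^sup>2"
proof -
  define c :: real where "c = 1 / exp 1"
  define P where "P = 1 + m + m\<^sup>2 / 2 + m ^ 3 / 6"
  have P: "1 \<le> P" using assms unfolding P_def by simp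
  define Q where "Q = 4 * P * (2 - m / 2)"
  have Q: "Q = 8 + 6 * m + 2 * m\<^sup>2 + m ^ 3 / 3 - m ^ 4 / 3"
    unfolding Q_def P_def by (simp add: field_simps power2_eq_square power3_eq_cube power4_eq_xxxx)
  have gap: "4 * P - (1 + m)\<^sup>2 = 3 + 2 * m + m\<^sup>2 + 2 / 3 * m ^ 3"
    unfolding P_def by (simp add: algebra_simps power2_eq_square power3_eq_cube)
  have "Q * c \<le> Q * (3679 / 10000)"
    using assms P inverse_exp_one_le unfolding Q_def c_def by (intro mult_left_mono) auto
  moreover have "0 \<le> m ^ 3" "0 \<le> m ^ 4" using assms by auto
  moreover have "0 \<le> m\<^sup>2 - 78 / 100 * m + 1521 / 10000"
    using zero_le_power2[of "m - 39 / 100"] by (simp add: power2_eq_square algebra_simps)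
  ultimately have "Q * c \<le> 4 * P - (1 + m)\<^sup>2"
    using assms Q gap by linarith
  then have "(2 - m / 2) * c * (4 * P) \<le> 4 * P - (1 + m)\<^sup>2"
    unfolding Q_def by (simp add: algebra_simps)
  then have "(2 - m / 2) * c \<le> (4 * P - (1 + m)\<^sup>2) / (4 * P)"
    using P by (simp add: pos_le_divide_eq)
  also have "\<dots> = 1 - (1 + m)\<^sup>2 / (4 * P)"
    using P by (simp add: diff_divide_distrib)
  finally have "(2 - m / 2) * c \<le> 1 - (1 + m)\<^sup>2 / (4 * P)" .
  moreover have "exp (- m) * ((1 + m) / 2)\<^sup>2 \<le> 1 / P * ((1 + m) / 2)\<^sup>2"
    using exp_neg_le_inverse_Taylor_cubic[OF assms(1), folded P_def] by (rule mult_right_mono) simp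
  moreover have "1 / P * ((1 + m) / 2)\<^sup>2 = (1 + m)\<^sup>2 / (4 * P)"
    by (simp add: power_divide)
  ultimately show ?thesis unfolding c_def by linarith
qed

lemma quadratic_ge_chord:
  fixes x t T :: real
  assumes "0 \<le> x" "0 \<le> t" "t \<le> T"
  shows "(T - t) * (1 - x) + t * (1 - x * (1 - T / 2)\<^sup>2) \<le> T * (1 - x * (1 - t / 2)\<^sup>2)"
proof -
  have "T * (1 - x * (1 - t / 2)\<^sup>2) - ((T - t) * (1 - x) + t * (1 - x * (1 - T / 2)\<^sup>2))
          = x * t * T * (T - t) / 4"
    by (simp add: field_simps power2_eq_square)
  moreover have "0 \<le> x * t * T * (T - t) / 4" using assms by simp
  ultimately show ?thesis by linarith
qed

lemma one_minus_exp_neg_mult_square_ge: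
  fixes m t :: real
  assumes "0 \<le> m" "m \<le> 1" "0 \<le> t" "t \<le> 1 - m"
  shows "2 * t * (1 / exp 1) + 3 * m / 2 * (1 / exp 1) \<le> 1 - exp (- m) * (1 - t / 2)\<^sup>2"
proof (cases "m = 1")
  case True
  then show ?thesis using assms one_minus_exp_neg_ge[of 1] by simp
next
  case False
  define T where "T = 1 - m"
  have "0 < T" using False assms unfolding T_def by simp
  have "T * (2 * t * (1 / exp 1) + 3 * m / 2 * (1 / exp 1))
          = (T - t) * (3 * m / 2 * (1 / exp 1)) + t * ((2 - m / 2) * (1 / exp 1))"
    unfolding T_def by (simp add: field_simps)
  also have "\<dots> \<le> (T - t) * (1 - exp (- m)) + t * (1 - exp (- m) * (1 - T / 2)\<^sup>2)"
    using assms one_minus_exp_neg_ge[OF assms(1,2)] one_minus_exp_neg_mult_ge[OF assms(1,2)]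
    unfolding T_def by (intro add_mono mult_left_mono) (auto simp: field_simps)
  also have "\<dots> \<le> T * (1 - exp (- m) * (1 - t / 2)\<^sup>2)"
    using assms by (intro quadratic_ge_chord) (auto simp: T_def)
  finally show ?thesis using \<open>0 < T\<close> by simp
qed

lemma product_le_square_mean:
  fixes a b :: real
  shows "(1 - a) * (1 - b) \<le> (1 - (a + b) / 2)\<^sup>2"
proof -
  have "(1 - (a + b) / 2)\<^sup>2 - (1 - a) * (1 - b) = ((a - b) / 2)\<^sup>2"
    by (simp add: power2_eq_square algebra_simps)
  then show ?thesis by (metis diff_ge_0_iff_ge zero_le_power2)
qed

theorem lemma3p3:
  fixes \<eta>1 \<eta>2 \<eta>3 zm zb :: real
  assumes "0 \<le> \<eta>1" "\<eta>1 \<le> 1" "0 \<le> \<eta>3" "\<eta>3 \<le> 1" "0 \<le> \<eta>2"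
    and "zm = min \<eta>2 1"
    and "zb = min (\<eta>1 + \<eta>2 + \<eta>3) 1 - zm"
  shows "(\<eta>1 + \<eta>3 - \<eta>1 * \<eta>3) * exp (- zm) + 1 - exp (- zm)
           \<ge> 2 / exp 1 * zb + 3 / (2 * exp 1) * zm"
proof -
  have zm: "0 \<le> zm" "zm \<le> 1" and zb: "0 \<le> zb" "zb \<le> 1 - zm" "zb \<le> \<eta>1 + \<eta>3"
    using assms by auto
  have "(1 - (\<eta>1 + \<eta>3) / 2)\<^sup>2 \<le> (1 - zb / 2)\<^sup>2"
    using zb assms(1-4) by (intro power_mono) auto
  then have "(1 - \<eta>1) * (1 - \<eta>3) \<le> (1 - zb / 2)\<^sup>2"
    using product_le_square_mean[of \<eta>1 \<eta>3] by linarith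
  then have "exp (- zm) * ((1 - \<eta>1) * (1 - \<eta>3)) \<le> exp (- zm) * (1 - zb / 2)\<^sup>2"
    by (rule mult_left_mono) simp
  moreover have "(\<eta>1 + \<eta>3 - \<eta>1 * \<eta>3) * exp (- zm) + 1 - exp (- zm)
                   = 1 - exp (- zm) * ((1 - \<eta>1) * (1 - \<eta>3))"
    by (simp add: algebra_simps)
  moreover have "2 / exp 1 * zb + 3 / (2 * exp 1) * zm = 2 * zb * (1 / exp 1) + 3 * zm / 2 * (1 / exp 1)"
    by simp
  ultimately show ?thesis
    using one_minus_exp_neg_mult_square_ge[OF zm zb(1,2)] by linarith
qed

end
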